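(* Let $(\boldsymbol x^H,\eta^H,\boldsymbol y^H,u^H)$ be the solution returned by Algorithm 1 (described in the context) and $(\boldsymbol x^*,\eta^*,\boldsymbol y^*,u^* )$ an optimal solution of the multistage model. Let $h_{\max}=\max_{i\in[M]}h_{1i}$, $f_{t,\max}=\max_{i}f_{ti}$, $f_{t,\min}=\min_if_{ti}$, $c_{t,\min}=\min_{i\in[M],j\in[N]}c_{tij}$, and $M_{\min}=\lceil\sum_{j=1}^Nd_{1j}/h_{\max}\rceil$, where $\boldsymbol d_1=(d_{11},\ldots,d_{1N})$ is the demand at the root node. Assume the denominator below is positive. Then $$\frac{z^{MS}_{T,R}(\boldsymbol x^H,\eta^H,\boldsymbol y^H,u^H)}{z^{MS}_{T,R}(\boldsymbol x^*,\eta^*,\boldsymbol y^*,u^* )}\le1+\frac{M\sum_{t=1}^Tf_{t,\max}}{M_{\min}\sum_{t=1}^Tf_{t,\min}+\sum_{t=1}^Tc_{t,\min}\min_{n\in\mathcal T_t}\{\sum_{j=1}^Nd_{n,j}\}}.$$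
   Context: Setting. Integers $T\ge2$, $M,N\ge1$; costs $f_{ti}\ge0$ (vector $\boldsymbol f_t$), $c_{tij}\ge0$ (vector $\boldsymbol c_t\in\mathbb R^{MN}$), capacities $h_{ti}>0$; $(\boldsymbol A_t\boldsymbol y)_j=\sum_iy_{ij}$, $(\boldsymbol B_t\boldsymbol y)_i=\frac1{h_{ti}}\sum_jy_{ij}$. Ceilings and maxima of vectors are componentwise. Scenario tree: finite rooted tree, node set $\mathcal T$, root $1$, all root-to-leaf paths of $T$ nodes; $\mathcal T_t$ nodes at depth $t$, $t_n$ period of $n$, $\mathcal L=\mathcal T_T$, $a(n)$ parent, $\mathcal C(n)$ children, $\mathcal P(n)$ nodes on the root-to-$n$ path (inclusive); probabilities $p_n>0$, $\sum_{n\in\mathcal T_t}p_n=1$, $\sum_{m\in\mathcal C(n)}p_m=p_n$; demands $\boldsymbol d_n=(d_{n,1},\ldots,d_{n,N})\in\mathbb R^N_{\ge0}$. Risk parameters $\lambda_t\in[0,1]$, $\alpha_t\in(0,1)$ ($t\ge2$); $\tilde{\boldsymbol f}_n=\boldsymbol f_{t_n}$ if $n=1$ else $(1-\lambda_{t_n})\boldsymbol f_{t_n}$; $\tilde{\boldsymbol c}_n=\boldsymbol c_{t_n}$ if $n=1$ else $(1-\lambda_{t_n})\boldsymbol c_{t_n}$; $\tilde\lambda_n=0$ if $n\in\mathcal L$ else $\lambda_{t_n+1}$; $\tilde\alpha_n=0$ if $n=1$ else $\lambda_{t_n}/(1-\alpha_{t_n})$. Multistage model: minimize $z^{MS}_{T,R}(\boldsymbol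 x,\eta,\boldsymbol y,u):=\sum_{n\in\mathcal T}p_n\big(\tilde{\boldsymbol f}_n^{\mathsf T}\sum_{m\in\mathcal P(n)}\boldsymbol x_m+\tilde{\boldsymbol c}_n^{\mathsf T}\boldsymbol y_n+\tilde\lambda_n\eta_n+\tilde\alpha_nu_n\big)$ over $\boldsymbol x_n\in\mathbb Z^M_+$, $\boldsymbol y_n\in\mathbb R^{MN}_+$ ($n\in\mathcal T$), $\eta_n\in\mathbb R$ ($n\notin\mathcal L$), $u_n\ge0$ ($n\ne1$), subject to $\boldsymbol A_{t_n}\boldsymbol y_n=\boldsymbol d_n$, $\boldsymbol B_{t_n}\boldsymbol y_n\le\sum_{m\in\mathcal P(n)}\boldsymbol x_m$ ($n\in\mathcal T$), $u_n+\eta_{a(n)}\ge\boldsymbol f_{t_n}^{\mathsf T}\sum_{m\in\mathcal P(n)}\boldsymbol x_m+\boldsymbol c_{t_n}^{\mathsf T}\boldsymbol y_n$ ($n\ne1$). Algorithm 1. Step 1: solve the LP relaxation (drop integrality of $\boldsymbol x$) of the multistage model, obtaining an optimal $(\boldsymbol x^{MSLP},\eta^{MSLP},\boldsymbol y^{MSLP},u^{MSLP})$; if all $\boldsymbol x^{MSLP}_n$ are integral, stop and return it. Step 2: set $k=0$ and $(\boldsymbol x^0,\eta^0,\boldsymbol y^0,u^0)=(\boldsymbol x^{MSLP},\eta^{MSLP},\boldsymbol y^{MSLP},u^{MSLP})$. Repeat until successive iterates differ by less than a tolerance $\epsilon$: (a) set $\boldsymbol x^{k+1}_1=\lceil\boldsymbol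 B_{t_1}\boldsymbol y^k_1\rceil$, $\boldsymbol x^{k+1}_n=\max_{m\in\mathcal P(n)}\lceil\boldsymbol B_{t_m}\boldsymbol y^k_m\rceil-\max_{m\in\mathcal P(a(n))}\lceil\boldsymbol B_{t_m}\boldsymbol y^k_m\rceil$ ($n\ne1$), $\eta^{k+1}_n=\max_{m\in\mathcal C(n)}\{\boldsymbol f_{t_m}^{\mathsf T}\sum_{l\in\mathcal P(m)}\boldsymbol x^{k+1}_l+\boldsymbol c_{t_m}^{\mathsf T}\boldsymbol y^k_m-u^k_m\}$ ($n\notin\mathcal L$); (b) for each $n\ne1$ independently, let $(\boldsymbol y^{k+1}_n,u^{k+1}_n)$ be an optimal solution of $\min\tilde{\boldsymbol c}_n^{\mathsf T}\boldsymbol y_n+\tilde\alpha_nu_n$ s.t. $\boldsymbol B_{t_n}\boldsymbol y_n\le\sum_{m\in\mathcal P(n)}\boldsymbol x^{k+1}_m$, $\boldsymbol A_{t_n}\boldsymbol y_n=\boldsymbol d_n$, $u_n-\boldsymbol c_{t_n}^{\mathsf T}\boldsymbol y_n\ge\boldsymbol f_{t_n}^{\mathsf T}\sum_{m\in\mathcal P(n)}\boldsymbol x^{k+1}_m-\eta^{k+1}_{a(n)}$, $\boldsymbol y_n\ge0$, $u_n\ge0$; for $n=1$ solve the same problem without $u_1$ and the last constraint; (c) $k\leftarrow k+1$. Return the final iterate, denoted $(\boldsymbol x^H,\eta^H,\boldsymbol y^H,u^H)$. *)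

theory Defs
  imports Complex_Main
begin

text \<open>Conventions.  Periods t and node depths are 1-based (root has depth 1,
leaves have depth T).  Facility indices i range over {..<M} and customer
indices j over {..<N} (0-based).\<close>

record 'n msinst =
  nT    :: nat
  nM    :: nat
  nN    :: nat
  fc    :: "nat \<Rightarrow> nat \<Rightarrow> real"
  cc    :: "nat \<Rightarrow> nat \<Rightarrow> nat \<Rightarrow> real"
  hc    :: "nat \<Rightarrow> nat \<Rightarrow> real"
  lam   :: "nat \<Rightarrow> real"
  alp   :: "nat \<Rightarrow> real"
  nodes :: "'n set"
  root  :: 'n
  par   :: "'n \<Rightarrow> 'n"
  dep   :: "'n \<Rightarrow> nat"
  prob  :: "'n \<Rightarrow> real"
  dem   :: "'n \<Rightarrow> nat \<Rightarrow> real"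

definition children :: "'n msinst \<Rightarrow> 'n \<Rightarrow> 'n set" where
  "children I n = {m \<in> nodes I. m \<noteq> root I \<and> par I m = n}"

definition path :: "'n msinst \<Rightarrow> 'n \<Rightarrow> 'n set" where
  "path I n = {m. \<exists>k < dep I n. (par I ^^ k) n = m}"

definition stage :: "'n msinst \<Rightarrow> nat \<Rightarrow> 'n set" where
  "stage I t = {n \<in> nodes I. dep I n = t}"

definition is_leaf :: "'n msinst \<Rightarrow> 'n \<Rightarrow> bool" where
  "is_leaf I n \<longleftrightarrow> dep I n = nT I"

definition valid_inst :: "'n msinst \<Rightarrow> bool" where
  "valid_inst I \<longleftrightarrow>
     nT I \<ge> 2 \<and> nM I \<ge> 1 \<and> nN I \<ge> 1
   \<and> (\<forall>t\<in>{1..nT I}. \<forall>i<nM I. fc I t i \<ge> 0 \<and> hc I t i > 0)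
   \<and> (\<forall>t\<in>{1..nT I}. \<forall>i<nM I. \<forall>j<nN I. cc I t i j \<ge> 0)
   \<and> (\<forall>t\<in>{2..nT I}. 0 \<le> lam I t \<and> lam I t \<le> 1 \<and> 0 < alp I t \<and> alp I t < 1)
   \<and> finite (nodes I) \<and> root I \<in> nodes I \<and> dep I (root I) = 1
   \<and> (\<forall>n\<in>nodes I. n \<noteq> root I \<longrightarrow> par I n \<in> nodes I \<and> dep I n = dep I (par I n) + 1)
   \<and> (\<forall>n\<in>nodes I. dep I n \<le> nT I)
   \<and> (\<forall>n\<in>nodes I. dep I n < nT I \<longrightarrow> children I n \<noteq> {})
   \<and> (\<forall>n\<in>nodes I. prob I n > 0)
   \<and> (\<forall>t\<in>{1..nT I}. (\<Sum>n\<in>stage I t. prob I n) = 1)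
   \<and> (\<forall>n\<in>nodes I. dep I n < nT I \<longrightarrow> (\<Sum>m\<in>children I n. prob I m) = prob I n)
   \<and> (\<forall>n\<in>nodes I. \<forall>j<nN I. dem I n j \<ge> 0)"

text \<open>A (candidate) solution (x, eta, y, u): x n i, eta n, y n i j, u n.
  eta at leaves and u at the root do not exist in the model; their values are
  irrelevant (zero coefficients, no constraints).\<close>
type_synonym 'n sol =
  "('n \<Rightarrow> nat \<Rightarrow> real) \<times> ('n \<Rightarrow> real) \<times> ('n \<Rightarrow> nat \<Rightarrow> nat \<Rightarrow> real) \<times> ('n \<Rightarrow> real)"

definition cumx :: "'n msinst \<Rightarrow> ('n \<Rightarrow> nat \<Rightarrow> real) \<Rightarrow> 'n \<Rightarrow> nat \<Rightarrow> real" where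
  "cumx I x n i = (\<Sum>m\<in>path I n. x m i)"

definition ftil :: "'n msinst \<Rightarrow> 'n \<Rightarrow> nat \<Rightarrow> real" where
  "ftil I n i = (if n = root I then fc I (dep I n) i else (1 - lam I (dep I n)) * fc I (dep I n) i)"

definition ctil :: "'n msinst \<Rightarrow> 'n \<Rightarrow> nat \<Rightarrow> nat \<Rightarrow> real" where
  "ctil I n i j = (if n = root I then cc I (dep I n) i j else (1 - lam I (dep I n)) * cc I (dep I n) i j)"

definition ltil :: "'n msinst \<Rightarrow> 'n \<Rightarrow> real" where
  "ltil I n = (if is_leaf I n then 0 else lam I (dep I n + 1))"

definition atil :: "'n msinst \<Rightarrow> 'n \<Rightarrow> real" where
  "atil I n = (if n = root I then 0 else lam I (dep I n) / (1 - alp I (dep I n)))"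

definition fdot :: "'n msinst \<Rightarrow> 'n \<Rightarrow> (nat \<Rightarrow> real) \<Rightarrow> real" where
  "fdot I n X = (\<Sum>i<nM I. fc I (dep I n) i * X i)"

definition cdot :: "'n msinst \<Rightarrow> 'n \<Rightarrow> (nat \<Rightarrow> nat \<Rightarrow> real) \<Rightarrow> real" where
  "cdot I n yv = (\<Sum>i<nM I. \<Sum>j<nN I. cc I (dep I n) i j * yv i j)"

definition Bop :: "'n msinst \<Rightarrow> 'n \<Rightarrow> (nat \<Rightarrow> nat \<Rightarrow> real) \<Rightarrow> nat \<Rightarrow> real" where
  "Bop I n yv i = (1 / hc I (dep I n) i) * (\<Sum>j<nN I. yv i j)"

definition zMS :: "'n msinst \<Rightarrow> 'n sol \<Rightarrow> real" where
  "zMS I s = (case s of (x, eta, y, u) \<Rightarrow>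
     (\<Sum>n\<in>nodes I. prob I n *
        ((\<Sum>i<nM I. ftil I n i * cumx I x n i)
         + (\<Sum>i<nM I. \<Sum>j<nN I. ctil I n i j * y n i j)
         + ltil I n * eta n + atil I n * u n)))"

definition feasible_LP :: "'n msinst \<Rightarrow> 'n sol \<Rightarrow> bool" where
  "feasible_LP I s = (case s of (x, eta, y, u) \<Rightarrow>
     (\<forall>n\<in>nodes I.
        (\<forall>i<nM I. x n i \<ge> 0)
      \<and> (\<forall>i<nM I. \<forall>j<nN I. y n i j \<ge> 0)
      \<and> (\<forall>j<nN I. (\<Sum>i<nM I. y n i j) = dem I n j)
      \<and> (\<forall>i<nM I. Bop I n (y n) i \<le> cumx I x n i)
      \<and> (n \<noteq> root I \<longrightarrow> u n \<ge> 0 \<and>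
            u n + eta (par I n) \<ge> fdot I n (cumx I x n) + cdot I n (y n))))"

definition feasible_MS :: "'n msinst \<Rightarrow> 'n sol \<Rightarrow> bool" where
  "feasible_MS I s \<longleftrightarrow> feasible_LP I s \<and>
     (\<forall>n\<in>nodes I. \<forall>i<nM I. fst s n i \<in> \<int>)"

definition optimal_LP :: "'n msinst \<Rightarrow> 'n sol \<Rightarrow> bool" where
  "optimal_LP I s \<longleftrightarrow> feasible_LP I s \<and> (\<forall>s'. feasible_LP I s' \<longrightarrow> zMS I s \<le> zMS I s')"

definition optimal_MS :: "'n msinst \<Rightarrow> 'n sol \<Rightarrow> bool" where
  "optimal_MS I s \<longleftrightarrow> feasible_MS I s \<and> (\<forall>s'. feasible_MS I s' \<longrightarrow> zMS I s \<le> zMS I s')"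

text \<open>Node subproblem of step (b): capacity vector X (= cumulative x^{k+1}),
  eta value of the parent etap.  For the root, u and the last constraint are absent
  (and atil at the root is 0).\<close>
definition sub_feas :: "'n msinst \<Rightarrow> 'n \<Rightarrow> (nat \<Rightarrow> real) \<Rightarrow> real \<Rightarrow> (nat \<Rightarrow> nat \<Rightarrow> real) \<Rightarrow> real \<Rightarrow> bool" where
  "sub_feas I n X etap yv uv \<longleftrightarrow>
     (\<forall>i<nM I. \<forall>j<nN I. yv i j \<ge> 0)
   \<and> (\<forall>j<nN I. (\<Sum>i<nM I. yv i j) = dem I n j)
   \<and> (\<forall>i<nM I. Bop I n yv i \<le> X i)
   \<and> (n \<noteq> root I \<longrightarrow> uv \<ge> 0 \<and> uv - cdot I n yv \<ge> fdot I n X - etap)"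

definition sub_obj :: "'n msinst \<Rightarrow> 'n \<Rightarrow> (nat \<Rightarrow> nat \<Rightarrow> real) \<Rightarrow> real \<Rightarrow> real" where
  "sub_obj I n yv uv = (\<Sum>i<nM I. \<Sum>j<nN I. ctil I n i j * yv i j) + atil I n * uv"

definition sub_opt :: "'n msinst \<Rightarrow> 'n \<Rightarrow> (nat \<Rightarrow> real) \<Rightarrow> real \<Rightarrow> (nat \<Rightarrow> nat \<Rightarrow> real) \<Rightarrow> real \<Rightarrow> bool" where
  "sub_opt I n X etap yv uv \<longleftrightarrow> sub_feas I n X etap yv uv \<and>
     (\<forall>yv' uv'. sub_feas I n X etap yv' uv' \<longrightarrow> sub_obj I n yv uv \<le> sub_obj I n yv' uv')"

definition capmax :: "'n msinst \<Rightarrow> ('n \<Rightarrow> nat \<Rightarrow> nat \<Rightarrow> real) \<Rightarrow> 'n \<Rightarrow> nat \<Rightarrow> int" where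
  "capmax I y n i = Max ((\<lambda>m. \<lceil>Bop I m (y m) i\<rceil>) ` path I n)"

text \<open>One iteration (a)+(b) of Step 2 of Algorithm 1: from s = iterate k to s' = iterate k+1.\<close>
definition alg_step :: "'n msinst \<Rightarrow> 'n sol \<Rightarrow> 'n sol \<Rightarrow> bool" where
  "alg_step I s s' = (case s of (x, eta, y, u) \<Rightarrow> case s' of (x', eta', y', u') \<Rightarrow>
     (\<forall>n\<in>nodes I. \<forall>i<nM I.
        x' n i = (if n = root I then real_of_int (capmax I y n i)
                  else real_of_int (capmax I y n i) - real_of_int (capmax I y (par I n) i)))
   \<and> (\<forall>n\<in>nodes I. \<not> is_leaf I n \<longrightarrow>
        eta' n = Max ((\<lambda>m. fdot I m (cumx I x' m) + cdot I m (y m) - u m) ` children I n))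
   \<and> (\<forall>n\<in>nodes I. sub_opt I n (cumx I x' n) (eta' (par I n)) (y' n) (u' n)))"

definition close_sol :: "'n msinst \<Rightarrow> real \<Rightarrow> 'n sol \<Rightarrow> 'n sol \<Rightarrow> bool" where
  "close_sol I eps s s' = (case s of (x, eta, y, u) \<Rightarrow> case s' of (x', eta', y', u') \<Rightarrow>
     (\<forall>n\<in>nodes I.
        (\<forall>i<nM I. \<bar>x n i - x' n i\<bar> < eps)
      \<and> (\<forall>i<nM I. \<forall>j<nN I. \<bar>y n i j - y' n i j\<bar> < eps)
      \<and> (\<not> is_leaf I n \<longrightarrow> \<bar>eta n - eta' n\<bar> < eps)
      \<and> (n \<noteq> root I \<longrightarrow> \<bar>u n - u' n\<bar> < eps)))"

definition alg_output :: "'n msinst \<Rightarrow> real \<Rightarrow> 'n sol \<Rightarrow> bool" where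
  "alg_output I eps sH \<longleftrightarrow>
     (\<exists>sLP. optimal_LP I sLP \<and>
       ((\<forall>n\<in>nodes I. \<forall>i<nM I. fst sLP n i \<in> \<int>) \<and> sH = sLP
        \<or> \<not> (\<forall>n\<in>nodes I. \<forall>i<nM I. fst sLP n i \<in> \<int>) \<and>
          (\<exists>S :: nat \<Rightarrow> 'n sol. \<exists>K \<ge> 1.
             S 0 = sLP \<and> (\<forall>k<K. alg_step I (S k) (S (Suc k)))
           \<and> (\<forall>k. 1 \<le> k \<and> k < K \<longrightarrow> \<not> close_sol I eps (S (k - 1)) (S k))
           \<and> close_sol I eps (S (K - 1)) (S K) \<and> sH = S K)))"

definition hmax :: "'n msinst \<Rightarrow> real" where
  "hmax I = Max ((\<lambda>i. hc I 1 i) ` {..<nM I})"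

definition fmax :: "'n msinst \<Rightarrow> nat \<Rightarrow> real" where
  "fmax I t = Max ((\<lambda>i. fc I t i) ` {..<nM I})"

definition fmin :: "'n msinst \<Rightarrow> nat \<Rightarrow> real" where
  "fmin I t = Min ((\<lambda>i. fc I t i) ` {..<nM I})"

definition cmin :: "'n msinst \<Rightarrow> nat \<Rightarrow> real" where
  "cmin I t = Min ((\<lambda>(i, j). cc I t i j) ` ({..<nM I} \<times> {..<nN I}))"

definition Mmin :: "'n msinst \<Rightarrow> real" where
  "Mmin I = real_of_int \<lceil>(\<Sum>j<nN I. dem I (root I) j) / hmax I\<rceil>"

definition dmin :: "'n msinst \<Rightarrow> nat \<Rightarrow> real" where
  "dmin I t = Min ((\<lambda>n. \<Sum>j<nN I. dem I n j) ` stage I t)"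

end

theory Submission
  imports Defs
begin

text \<open>
At every non-root node the nested mean-CVaR objective charges (1 - \<lambda>_t) times the node cost
f_t^T X_n + c_t^T y_n plus \<lambda>_t/(1 - \<alpha>_t) u_n, and the parent charges \<lambda>_t \<eta>_{a(n)} on
behalf of n. Since u_n \<ge> 0 and u_n + \<eta>_{a(n)} dominates the node cost, every LP-feasible
solution costs at least the expected node cost. For an integral solution the root capacity is
an integer of at least M_min, cumulative capacities grow along paths and demand must be served
at cost at least c_t,min, so the denominator bounds the optimum z^* from below.

Conversely, the first rounding step of Algorithm 1 raises each cumulative capacity by less than
one unit while the previous recourse decisions stay feasible for the node subproblems, and \<eta>_n
grows by at most the cost of one unit of every facility in period t_n + 1. The weights of the
periods telescope, so the cost rises by at most \<Sum>_t \<Sum>_i f_ti \<le> M \<Sum>_t f_t,max. Later steps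
start from integral cumulative capacities, which rounding leaves unchanged, so they do not
increase the cost. Together with z^MSLP \<le> z^* this bounds z^H.
\<close>

definition neutral_weight :: "'n msinst \<Rightarrow> 'n \<Rightarrow> real" where
  "neutral_weight I n = (if n = root I then 1 else 1 - lam I (dep I n))"

definition ftotal :: "'n msinst \<Rightarrow> nat \<Rightarrow> real" where
  "ftotal I t = (\<Sum>i<nM I. fc I t i)"

lemma le_cvar_combination:
  fixes z u eta lambda alpha :: real
  assumes "0 \<le> lambda" "0 \<le> alpha" "alpha < 1" "0 \<le> u" "z \<le> u + eta"
  shows "z \<le> (1 - lambda) * z + lambda / (1 - alpha) * u + lambda * eta"
proof -
  have "u \<le> u / (1 - alpha)" using assms by (simp add: field_simps mult_left_le)
  then have "lambda * u \<le> lambda * (u / (1 - alpha))" using assms(1) by (rule mult_left_mono)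
  moreover have "lambda * z \<le> lambda * (u + eta)" using assms by (simp add: mult_left_mono)
  ultimately show ?thesis by (simp add: algebra_simps)
qed

lemma divide_le_one_plus_divide:
  fixes h z d e :: real
  assumes "0 < d" "d \<le> z" "0 \<le> e" "h \<le> z + e"
  shows "h / z \<le> 1 + e / d"
proof -
  have "h / z \<le> (z + e) / z" using assms by (simp add: divide_right_mono)
  also have "\<dots> = 1 + e / z" using assms by (simp add: add_divide_distrib)
  also have "\<dots> \<le> 1 + e / d" using assms by (simp add: frac_le)
  finally show ?thesis .
qed

locale valid_instance =
  fixes I :: "'n msinst"
  assumes valid: "valid_inst I"
begin

lemma nT_ge_2: "nT I \<ge> 2"
  and nM_pos: "nM I \<ge> 1"
  and nN_pos: "nN I \<ge> 1"
  and finite_nodes: "finite (nodes I)"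
  and root_in_nodes: "root I \<in> nodes I"
  and dep_root: "dep I (root I) = 1"
  using valid unfolding valid_inst_def by auto

lemma fc_nonneg: "1 \<le> t \<Longrightarrow> t \<le> nT I \<Longrightarrow> i < nM I \<Longrightarrow> 0 \<le> fc I t i"
  and hc_pos: "1 \<le> t \<Longrightarrow> t \<le> nT I \<Longrightarrow> i < nM I \<Longrightarrow> 0 < hc I t i"
  and cc_nonneg: "1 \<le> t \<Longrightarrow> t \<le> nT I \<Longrightarrow> i < nM I \<Longrightarrow> j < nN I \<Longrightarrow> 0 \<le> cc I t i j"
  and lam_alp_bounds: "2 \<le> t \<Longrightarrow> t \<le> nT I \<Longrightarrow>
         0 \<le> lam I t \<and> lam I t \<le> 1 \<and> 0 < alp I t \<and> alp I t < 1"
  using valid unfolding valid_inst_def by auto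

lemma par_in_nodes: "n \<in> nodes I \<Longrightarrow> n \<noteq> root I \<Longrightarrow> par I n \<in> nodes I"
  and dep_par: "n \<in> nodes I \<Longrightarrow> n \<noteq> root I \<Longrightarrow> dep I n = dep I (par I n) + 1"
  and dep_le_nT: "n \<in> nodes I \<Longrightarrow> dep I n \<le> nT I"
  and children_nonempty: "n \<in> nodes I \<Longrightarrow> dep I n < nT I \<Longrightarrow> children I n \<noteq> {}"
  and prob_pos: "n \<in> nodes I \<Longrightarrow> 0 < prob I n"
  and sum_prob_stage: "1 \<le> t \<Longrightarrow> t \<le> nT I \<Longrightarrow> (\<Sum>n\<in>stage I t. prob I n) = 1"
  and sum_prob_children:
    "n \<in> nodes I \<Longrightarrow> dep I n < nT I \<Longrightarrow> (\<Sum>m\<in>children I n. prob I m) = prob I n"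
  and dem_nonneg: "n \<in> nodes I \<Longrightarrow> j < nN I \<Longrightarrow> 0 \<le> dem I n j"
  using valid unfolding valid_inst_def by auto

subsection \<open>Scenario trees\<close>

lemma dep_ge_1: "n \<in> nodes I \<Longrightarrow> 1 \<le> dep I n"
  using dep_root dep_par by (cases "n = root I") auto

lemma dep_ge_2: "n \<in> nodes I \<Longrightarrow> n \<noteq> root I \<Longrightarrow> 2 \<le> dep I n"
  using dep_ge_1 dep_par par_in_nodes by fastforce

lemma root_iff_dep_1: "n \<in> nodes I \<Longrightarrow> n = root I \<longleftrightarrow> dep I n = 1"
  using dep_root dep_ge_2 by fastforce

lemma ancestor_in_nodes:
  assumes "n \<in> nodes I" "k < dep I n"
  shows "(par I ^^ k) n \<in> nodes I \<and> dep I ((par I ^^ k) n) = dep I n - k"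
  using assms(2)
proof (induction k)
  case 0
  then show ?case using assms(1) by simp
next
  case (Suc k)
  then have m: "(par I ^^ k) n \<in> nodes I" "dep I ((par I ^^ k) n) = dep I n - k" by auto
  then have "(par I ^^ k) n \<noteq> root I" using Suc.prems dep_root by auto
  then show ?case using m par_in_nodes dep_par by fastforce
qed

lemma finite_children: "finite (children I n)"
  and in_children_iff: "m \<in> children I n \<longleftrightarrow> m \<in> nodes I \<and> m \<noteq> root I \<and> par I m = n"
  using finite_nodes unfolding children_def by (auto intro: finite_subset)

lemma children_eq: "children I n = {m. m \<in> nodes I - {root I} \<and> par I m = n}"
  unfolding children_def by auto

lemma children_leaf: "is_leaf I n \<Longrightarrow> children I n = {}"
  unfolding is_leaf_def using in_children_iff dep_par dep_le_nT by fastforce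

lemma path_eq_image: "path I n = (\<lambda>k. (par I ^^ k) n) ` {..<dep I n}"
  unfolding path_def by auto

lemma finite_path: "finite (path I n)"
  unfolding path_eq_image by simp

lemma path_subset_nodes: "n \<in> nodes I \<Longrightarrow> path I n \<subseteq> nodes I"
  unfolding path_def using ancestor_in_nodes by blast

lemma dep_le_of_in_path: "n \<in> nodes I \<Longrightarrow> l \<in> path I n \<Longrightarrow> dep I l \<le> dep I n"
  unfolding path_def using ancestor_in_nodes by fastforce

lemma in_path_self: "n \<in> nodes I \<Longrightarrow> n \<in> path I n"
  unfolding path_def using dep_ge_1[of n] by (auto intro!: exI[of _ 0])

lemma path_root: "path I (root I) = {root I}"
  unfolding path_def dep_root by auto

lemma path_nonroot:
  assumes "n \<in> nodes I" "n \<noteq> root I"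
  shows "path I n = insert n (path I (par I n))"
proof -
  have "dep I n = Suc (dep I (par I n))" using dep_par assms by simp
  then show ?thesis
    unfolding path_eq_image by (simp only: lessThan_Suc_eq_insert_0)
      (simp add: image_image funpow_Suc_right del: funpow.simps)
qed

lemma path_subset_path:
  assumes "n \<in> nodes I" "l \<in> path I n"
  shows "path I l \<subseteq> path I n"
proof
  fix m assume "m \<in> path I l"
  then obtain j where j: "j < dep I l" "m = (par I ^^ j) l" unfolding path_def by auto
  obtain k where k: "k < dep I n" "l = (par I ^^ k) n" using assms(2) unfolding path_def by auto
  have "dep I l = dep I n - k" using ancestor_in_nodes[OF assms(1) k(1)] k(2) by simp
  then have "j + k < dep I n" "m = (par I ^^ (j + k)) n" using j k by (auto simp: funpow_add)
  then show "m \<in> path I n" unfolding path_def by auto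
qed

lemma root_in_path:
  assumes "n \<in> nodes I"
  shows "root I \<in> path I n"
proof -
  have k: "dep I n - 1 < dep I n" using dep_ge_1[OF assms] by simp
  then have "(par I ^^ (dep I n - 1)) n = root I"
    using ancestor_in_nodes[OF assms k] dep_ge_1[OF assms] root_iff_dep_1 by auto
  then show ?thesis using k unfolding path_def by blast
qed

lemma sum_path_telescope:
  assumes "n \<in> nodes I"
    and "\<And>m. m \<in> nodes I \<Longrightarrow> x m = (if m = root I then c m else c m - c (par I m))"
  shows "(\<Sum>m\<in>path I n. x m) = (c n :: real)"
  using assms(1)
proof (induction "dep I n" arbitrary: n rule: less_induct)
  case less
  show ?case
  proof (cases "n = root I")
    case True
    then show ?thesis using assms(2) root_in_nodes by (simp add: path_root)
  next
    case False
    have p: "par I n \<in> nodes I" "dep I (par I n) < dep I n"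
      using False less.prems par_in_nodes dep_par by auto
    have "n \<notin> path I (par I n)" using dep_le_of_in_path[OF p(1)] p(2) by fastforce
    then have "(\<Sum>m\<in>path I n. x m) = x n + (\<Sum>m\<in>path I (par I n). x m)"
      using path_nonroot[OF less.prems False] finite_path by simp
    then show ?thesis using less.hyps[OF p(2,1)] assms(2) less.prems False by simp
  qed
qed

lemma sum_nodes_by_stage: "(\<Sum>n\<in>nodes I. g n) = (\<Sum>t=1..nT I. \<Sum>n\<in>stage I t. g n)"
  unfolding stage_def
  by (rule sum.group[symmetric, OF finite_nodes]) (use dep_ge_1 dep_le_nT in auto)

lemma sum_stage_prob_mult: "1 \<le> t \<Longrightarrow> t \<le> nT I \<Longrightarrow> (\<Sum>n\<in>stage I t. prob I n * c) = c"
  using sum_prob_stage by (simp add: sum_distrib_right[symmetric])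

subsection \<open>The objective\<close>

lemma neutral_weight_nonneg: "n \<in> nodes I \<Longrightarrow> 0 \<le> neutral_weight I n"
  unfolding neutral_weight_def using lam_alp_bounds dep_ge_2 dep_le_nT by auto

lemma ltil_nonneg: "n \<in> nodes I \<Longrightarrow> 0 \<le> ltil I n"
  unfolding ltil_def is_leaf_def using lam_alp_bounds[of "dep I n + 1"] dep_ge_1 dep_le_nT
  by (cases "dep I n = nT I") fastforce+

lemma sum_ftil: "(\<Sum>i<nM I. ftil I n i * X i) = neutral_weight I n * fdot I n X"
  unfolding ftil_def neutral_weight_def fdot_def by (simp add: sum_distrib_left algebra_simps)

lemma sub_obj_eq: "sub_obj I n yv uv = neutral_weight I n * cdot I n yv + atil I n * uv"
  unfolding sub_obj_def ctil_def neutral_weight_def cdot_def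
  by (simp add: sum_distrib_left algebra_simps)

lemma zMS_eq: "zMS I (x, eta, y, u) = (\<Sum>n\<in>nodes I. prob I n *
    (neutral_weight I n * fdot I n (cumx I x n) + sub_obj I n (y n) (u n) + ltil I n * eta n))"
  unfolding zMS_def sub_obj_def sum_ftil by (simp add: algebra_simps)

text \<open>The weight \<lambda>_{t+1} of \<eta>_n is passed on to the children of n, which have total
  probability p_n; at the root, 1 - neutral_weight vanishes and the junk value g (par I (root I))
  does not matter.\<close>
lemma sum_ltil_eq_sum_parent:
  "(\<Sum>n\<in>nodes I. prob I n * (ltil I n * g n))
    = (\<Sum>m\<in>nodes I. prob I m * ((1 - neutral_weight I m) * g (par I m)))"
proof -
  have "(\<Sum>m\<in>nodes I. prob I m * ((1 - neutral_weight I m) * g (par I m)))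
      = (\<Sum>m\<in>nodes I - {root I}. prob I m * (lam I (dep I m) * g (par I m)))"
    by (subst sum.remove[OF finite_nodes root_in_nodes]) (simp add: neutral_weight_def)
  also have "\<dots> = (\<Sum>n\<in>nodes I. \<Sum>m\<in>children I n. prob I m * (lam I (dep I m) * g (par I m)))"
    unfolding children_eq
    by (rule sum.group[symmetric]) (use finite_nodes par_in_nodes in auto)
  also have "\<dots> = (\<Sum>n\<in>nodes I. prob I n * (ltil I n * g n))"
  proof (rule sum.cong[OF refl])
    fix n assume n: "n \<in> nodes I"
    have "(\<Sum>m\<in>children I n. prob I m * (lam I (dep I m) * g (par I m)))
        = (\<Sum>m\<in>children I n. prob I m) * (lam I (dep I n + 1) * g n)"
      unfolding sum_distrib_right by (rule sum.cong) (auto simp: in_children_iff dep_par)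
    also have "\<dots> = prob I n * (ltil I n * g n)"
      using sum_prob_children[OF n] children_leaf dep_le_nT[OF n]
      unfolding ltil_def is_leaf_def by (cases "dep I n < nT I") auto
    finally show "(\<Sum>m\<in>children I n. prob I m * (lam I (dep I m) * g (par I m)))
        = prob I n * (ltil I n * g n)" .
  qed
  finally show ?thesis ..
qed

lemma node_cost_le_zMS:
  assumes feas: "feasible_LP I (x, eta, y, u)"
  shows "(\<Sum>n\<in>nodes I. prob I n * (fdot I n (cumx I x n) + cdot I n (y n)))
    \<le> zMS I (x, eta, y, u)"
proof -
  have "zMS I (x, eta, y, u) = (\<Sum>n\<in>nodes I. prob I n *
      (neutral_weight I n * (fdot I n (cumx I x n) + cdot I n (y n)) + atil I n * u n))
      + (\<Sum>n\<in>nodes I. prob I n * (ltil I n * eta n))"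
    unfolding zMS_eq sub_obj_eq by (simp add: sum.distrib[symmetric] algebra_simps)
  also have "\<dots> = (\<Sum>n\<in>nodes I. prob I n *
      (neutral_weight I n * (fdot I n (cumx I x n) + cdot I n (y n)) + atil I n * u n
       + (1 - neutral_weight I n) * eta (par I n)))"
    unfolding sum_ltil_eq_sum_parent by (simp add: sum.distrib[symmetric] algebra_simps)
  finally have zMS: "zMS I (x, eta, y, u) = (\<Sum>n\<in>nodes I. prob I n *
      (neutral_weight I n * (fdot I n (cumx I x n) + cdot I n (y n)) + atil I n * u n
       + (1 - neutral_weight I n) * eta (par I n)))" .
  have node: "fdot I n (cumx I x n) + cdot I n (y n)
      \<le> neutral_weight I n * (fdot I n (cumx I x n) + cdot I n (y n)) + atil I n * u n
        + (1 - neutral_weight I n) * eta (par I n)" if n: "n \<in> nodes I" for n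
  proof (cases "n = root I")
    case True
    then show ?thesis by (simp add: neutral_weight_def atil_def)
  next
    case False
    then have "0 \<le> u n" "fdot I n (cumx I x n) + cdot I n (y n) \<le> u n + eta (par I n)"
      using feas n unfolding feasible_LP_def by auto
    then show ?thesis
      using le_cvar_combination lam_alp_bounds[OF dep_ge_2[OF n False] dep_le_nT[OF n]] False
      unfolding neutral_weight_def atil_def by simp
  qed
  show ?thesis
    unfolding zMS using node prob_pos by (intro sum_mono mult_left_mono) (auto intro: less_imp_le)
qed

subsection \<open>Lower bound for integral solutions\<close>

lemma fmin_nonneg: "1 \<le> t \<Longrightarrow> t \<le> nT I \<Longrightarrow> 0 \<le> fmin I t"
  and fmin_le: "i < nM I \<Longrightarrow> fmin I t \<le> fc I t i"
  unfolding fmin_def using nM_pos fc_nonneg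
  by (auto intro!: Min.boundedI Min_le simp: lessThan_empty_iff)

lemma cmin_nonneg: "1 \<le> t \<Longrightarrow> t \<le> nT I \<Longrightarrow> 0 \<le> cmin I t"
  and cmin_le: "i < nM I \<Longrightarrow> j < nN I \<Longrightarrow> cmin I t \<le> cc I t i j"
  unfolding cmin_def using nM_pos nN_pos cc_nonneg
  by (auto intro!: Min.boundedI Min_le simp: lessThan_empty_iff)

lemma hc_le_hmax: "i < nM I \<Longrightarrow> hc I 1 i \<le> hmax I"
  unfolding hmax_def by (rule Max_ge) auto

lemma cumx_root: "cumx I x (root I) i = x (root I) i"
  unfolding cumx_def path_root by simp

lemma cumx_mono_path:
  assumes "\<forall>m\<in>nodes I. 0 \<le> x m i" "n \<in> nodes I" "l \<in> path I n"
  shows "cumx I x l i \<le> cumx I x n i"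
  unfolding cumx_def using assms path_subset_path[OF assms(2,3)] path_subset_nodes[OF assms(2)]
  by (intro sum_mono2[OF finite_path]) auto

lemma sum_dem_eq_sum_flow:
  assumes "feasible_LP I (x, eta, y, u)" "n \<in> nodes I"
  shows "(\<Sum>j<nN I. dem I n j) = (\<Sum>i<nM I. \<Sum>j<nN I. y n i j)"
  using assms unfolding feasible_LP_def by (subst sum.swap) simp

text \<open>Integrality enters the lower bound only here, through the ceiling in M_min.\<close>
lemma Mmin_le_root_capacity:
  assumes feas: "feasible_LP I (x, eta, y, u)" and int: "\<forall>i<nM I. x (root I) i \<in> \<int>"
  shows "Mmin I \<le> (\<Sum>i<nM I. x (root I) i)"
proof -
  have "(\<Sum>j<nN I. dem I (root I) j) / hmax I
      = (\<Sum>i<nM I. (\<Sum>j<nN I. y (root I) i j) / hmax I)"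
    unfolding sum_dem_eq_sum_flow[OF feas root_in_nodes] by (simp add: sum_divide_distrib)
  also have "\<dots> \<le> (\<Sum>i<nM I. Bop I (root I) (y (root I)) i)"
  proof (rule sum_mono)
    fix i assume i: "i \<in> {..<nM I}"
    have "0 \<le> (\<Sum>j<nN I. y (root I) i j)"
      using feas root_in_nodes i unfolding feasible_LP_def by (auto intro: sum_nonneg)
    moreover have "0 < hc I 1 i" using hc_pos nT_ge_2 i by simp
    ultimately show "(\<Sum>j<nN I. y (root I) i j) / hmax I \<le> Bop I (root I) (y (root I)) i"
      unfolding Bop_def dep_root using hc_le_hmax[of i] i
      by (simp add: divide_left_mono)
  qed
  also have "\<dots> \<le> (\<Sum>i<nM I. x (root I) i)"
    using feas root_in_nodes unfolding feasible_LP_def by (intro sum_mono) (auto simp: cumx_root)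
  finally have "(\<Sum>j<nN I. dem I (root I) j) / hmax I \<le> (\<Sum>i<nM I. x (root I) i)" .
  moreover have "(\<Sum>i<nM I. x (root I) i) \<in> \<int>" using int by (intro Ints_sum) auto
  ultimately show ?thesis unfolding Mmin_def by (auto elim!: Ints_cases simp: ceiling_le)
qed

lemma fmin_Mmin_le_fdot:
  assumes feas: "feasible_LP I (x, eta, y, u)" and int: "\<forall>i<nM I. x (root I) i \<in> \<int>"
    and n: "n \<in> nodes I"
  shows "fmin I (dep I n) * Mmin I \<le> fdot I n (cumx I x n)"
proof -
  have x_nonneg: "\<forall>m\<in>nodes I. \<forall>i<nM I. 0 \<le> x m i" using feas unfolding feasible_LP_def by auto
  have "fmin I (dep I n) * Mmin I \<le> (\<Sum>i<nM I. fmin I (dep I n) * cumx I x (root I) i)"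
    using Mmin_le_root_capacity[OF feas int] fmin_nonneg dep_ge_1[OF n] dep_le_nT[OF n]
    by (simp add: cumx_root sum_distrib_left[symmetric] mult_left_mono)
  also have "\<dots> \<le> (\<Sum>i<nM I. fc I (dep I n) i * cumx I x n i)"
  proof (rule sum_mono)
    fix i assume i: "i \<in> {..<nM I}"
    have "0 \<le> cumx I x (root I) i" using x_nonneg root_in_nodes i by (simp add: cumx_root)
    moreover have "cumx I x (root I) i \<le> cumx I x n i"
      using cumx_mono_path x_nonneg n root_in_path[OF n] i by simp
    ultimately show "fmin I (dep I n) * cumx I x (root I) i \<le> fc I (dep I n) i * cumx I x n i"
      using fmin_le fmin_nonneg fc_nonneg dep_ge_1[OF n] dep_le_nT[OF n] i
      by (intro mult_mono) auto
  qed
  finally show ?thesis unfolding fdot_def .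
qed

lemma cmin_dmin_le_cdot:
  assumes feas: "feasible_LP I (x, eta, y, u)" and n: "n \<in> nodes I"
  shows "cmin I (dep I n) * dmin I (dep I n) \<le> cdot I n (y n)"
proof -
  have y: "\<forall>i<nM I. \<forall>j<nN I. 0 \<le> y n i j" "\<forall>j<nN I. (\<Sum>i<nM I. y n i j) = dem I n j"
    using feas n unfolding feasible_LP_def by auto
  have "dmin I (dep I n) \<le> (\<Sum>j<nN I. dem I n j)"
    unfolding dmin_def stage_def using finite_nodes n by (intro Min_le) auto
  then have "cmin I (dep I n) * dmin I (dep I n) \<le> cmin I (dep I n) * (\<Sum>j<nN I. dem I n j)"
    using cmin_nonneg dep_ge_1[OF n] dep_le_nT[OF n] by (simp add: mult_left_mono)
  also have "\<dots> = (\<Sum>i<nM I. \<Sum>j<nN I. cmin I (dep I n) * y n i j)"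
    unfolding sum_dem_eq_sum_flow[OF feas n] by (simp add: sum_distrib_left)
  also have "\<dots> \<le> (\<Sum>i<nM I. \<Sum>j<nN I. cc I (dep I n) i j * y n i j)"
    using y cmin_le by (intro sum_mono mult_right_mono) auto
  finally show ?thesis unfolding cdot_def .
qed

lemma lower_bound_le_zMS:
  assumes feas: "feasible_LP I (x, eta, y, u)" and int: "\<forall>i<nM I. x (root I) i \<in> \<int>"
  shows "Mmin I * (\<Sum>t=1..nT I. fmin I t) + (\<Sum>t=1..nT I. cmin I t * dmin I t)
    \<le> zMS I (x, eta, y, u)"
proof -
  have "Mmin I * (\<Sum>t=1..nT I. fmin I t) + (\<Sum>t=1..nT I. cmin I t * dmin I t)
      = (\<Sum>t=1..nT I. \<Sum>n\<in>stage I t. prob I n * (fmin I t * Mmin I + cmin I t * dmin I t))"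
    by (simp add: sum_stage_prob_mult sum_distrib_left sum.distrib mult.commute)
  also have "\<dots> = (\<Sum>n\<in>nodes I.
      prob I n * (fmin I (dep I n) * Mmin I + cmin I (dep I n) * dmin I (dep I n)))"
    unfolding sum_nodes_by_stage by (intro sum.cong refl) (auto simp: stage_def)
  also have "\<dots> \<le> (\<Sum>n\<in>nodes I. prob I n * (fdot I n (cumx I x n) + cdot I n (y n)))"
    using fmin_Mmin_le_fdot[OF feas int] cmin_dmin_le_cdot[OF feas] prob_pos
    by (intro sum_mono mult_left_mono add_mono) (auto intro: less_imp_le)
  also have "\<dots> \<le> zMS I (x, eta, y, u)" by (rule node_cost_le_zMS[OF feas])
  finally show ?thesis .
qed

subsection \<open>Rounding steps of Algorithm 1\<close>

lemma Bop_nonneg: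
  assumes "n \<in> nodes I" "i < nM I" "\<forall>j<nN I. 0 \<le> yv i j"
  shows "0 \<le> Bop I n yv i"
proof -
  have "0 < hc I (dep I n) i" using hc_pos dep_ge_1 dep_le_nT assms by simp
  moreover have "0 \<le> (\<Sum>j<nN I. yv i j)" using assms(3) by (intro sum_nonneg) simp
  ultimately show ?thesis unfolding Bop_def by simp
qed

lemma ceiling_Bop_le_capmax: "n \<in> nodes I \<Longrightarrow> \<lceil>Bop I n (y n) i\<rceil> \<le> capmax I y n i"
  unfolding capmax_def using in_path_self finite_path by (intro Max_ge) auto

lemma capmax_mono: "n \<in> nodes I \<Longrightarrow> l \<in> path I n \<Longrightarrow> capmax I y l i \<le> capmax I y n i"
  unfolding capmax_def using path_subset_path in_path_self path_subset_nodes finite_path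
  by (intro Max_mono) blast+

lemma capmax_le_ceiling:
  "n \<in> nodes I \<Longrightarrow> \<forall>l\<in>path I n. Bop I l (y l) i \<le> C \<Longrightarrow> capmax I y n i \<le> \<lceil>C\<rceil>"
  unfolding capmax_def using in_path_self finite_path by (auto intro!: Max.boundedI ceiling_mono)

lemma alg_step_cumx:
  assumes "alg_step I (x, eta, y, u) (x', eta', y', u')" "n \<in> nodes I" "i < nM I"
  shows "cumx I x' n i = capmax I y n i"
  unfolding cumx_def using assms unfolding alg_step_def by (intro sum_path_telescope) auto

lemma alg_step_eta:
  assumes "alg_step I (x, eta, y, u) (x', eta', y', u')" "n \<in> nodes I" "\<not> is_leaf I n"
  shows "eta' n = Max ((\<lambda>m. fdot I m (cumx I x' m) + cdot I m (y m) - u m) ` children I n)"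
  using assms unfolding alg_step_def by simp

lemma alg_step_feasible_LP:
  assumes step: "alg_step I (x, eta, y, u) (x', eta', y', u')"
  shows "feasible_LP I (x', eta', y', u')"
proof -
  have sub: "sub_feas I n (cumx I x' n) (eta' (par I n)) (y' n) (u' n)" if "n \<in> nodes I" for n
    using step that unfolding alg_step_def sub_opt_def by auto
  have "0 \<le> x' n i" if n: "n \<in> nodes I" and i: "i < nM I" for n i
  proof (cases "n = root I")
    case True
    have "0 \<le> Bop I n (y' n) i" using sub[OF n] Bop_nonneg n i unfolding sub_feas_def by auto
    also have "\<dots> \<le> cumx I x' n i" using sub[OF n] i unfolding sub_feas_def by auto
    finally show ?thesis using True by (simp add: cumx_root)
  next
    case False
    then have "par I n \<in> path I n" using n path_nonroot in_path_self par_in_nodes by auto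
    then show ?thesis using step n i False capmax_mono[OF n] unfolding alg_step_def by auto
  qed
  moreover have "fdot I n (cumx I x' n) + cdot I n (y' n) \<le> u' n + eta' (par I n)"
    if "n \<in> nodes I" "n \<noteq> root I" for n
    using sub[OF that(1)] that(2) unfolding sub_feas_def by auto
  ultimately show ?thesis using sub unfolding feasible_LP_def sub_feas_def prod.case by blast
qed

lemma alg_step_cumx_le_ceiling:
  assumes feas: "feasible_LP I (x, eta, y, u)"
    and step: "alg_step I (x, eta, y, u) (x', eta', y', u')"
    and n: "n \<in> nodes I" and i: "i < nM I"
  shows "cumx I x' n i \<le> \<lceil>cumx I x n i\<rceil>"
proof -
  have "Bop I l (y l) i \<le> cumx I x n i" if l: "l \<in> path I n" for l
  proof -
    have "Bop I l (y l) i \<le> cumx I x l i"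
      using feas l path_subset_nodes[OF n] i unfolding feasible_LP_def by auto
    also have "\<dots> \<le> cumx I x n i"
      using feas i by (intro cumx_mono_path[OF _ n l]) (auto simp: feasible_LP_def)
    finally show ?thesis .
  qed
  then show ?thesis using alg_step_cumx[OF step n i] capmax_le_ceiling[OF n] by simp
qed

lemma alg_step_prev_sub_feas:
  assumes feas: "feasible_LP I (x, eta, y, u)"
    and step: "alg_step I (x, eta, y, u) (x', eta', y', u')"
    and n: "n \<in> nodes I"
  shows "sub_feas I n (cumx I x' n) (eta' (par I n)) (y n) (u n)"
  unfolding sub_feas_def
proof (intro conjI allI impI)
  show "0 \<le> y n i j" if "i < nM I" "j < nN I" for i j
    using feas n that unfolding feasible_LP_def by auto
  show "(\<Sum>i<nM I. y n i j) = dem I n j" if "j < nN I" for j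
    using feas n that unfolding feasible_LP_def by auto
  show "Bop I n (y n) i \<le> cumx I x' n i" if i: "i < nM I" for i
  proof -
    have "Bop I n (y n) i \<le> of_int \<lceil>Bop I n (y n) i\<rceil>" by (rule le_of_int_ceiling)
    also have "\<dots> \<le> of_int (capmax I y n i)" using ceiling_Bop_le_capmax[OF n] by simp
    finally show ?thesis using alg_step_cumx[OF step n i] by simp
  qed
  assume nonroot: "n \<noteq> root I"
  then show "0 \<le> u n" using feas n unfolding feasible_LP_def by auto
  have parent: "par I n \<in> nodes I" using par_in_nodes[OF n nonroot] .
  have nonleaf: "\<not> is_leaf I (par I n)"
    using dep_par[OF n nonroot] dep_le_nT[OF n] unfolding is_leaf_def by simp
  have "n \<in> children I (par I n)" using n nonroot by (simp add: in_children_iff)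
  then have "fdot I n (cumx I x' n) + cdot I n (y n) - u n \<le> eta' (par I n)"
    unfolding alg_step_eta[OF step parent nonleaf] using finite_children by (intro Max_ge) auto
  then show "fdot I n (cumx I x' n) - eta' (par I n) \<le> u n - cdot I n (y n)" by simp
qed

lemma fdot_le_shift:
  assumes "n \<in> nodes I" "\<forall>i<nM I. X i \<le> X' i + \<delta>"
  shows "fdot I n X \<le> fdot I n X' + \<delta> * ftotal I (dep I n)"
proof -
  have "fdot I n X \<le> (\<Sum>i<nM I. fc I (dep I n) i * (X' i + \<delta>))"
    unfolding fdot_def using assms fc_nonneg dep_ge_1 dep_le_nT
    by (intro sum_mono mult_left_mono) auto
  then show ?thesis unfolding fdot_def ftotal_def
    by (simp add: algebra_simps sum.distrib sum_distrib_left)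
qed

lemma alg_step_eta_le:
  assumes feas: "feasible_LP I (x, eta, y, u)"
    and step: "alg_step I (x, eta, y, u) (x', eta', y', u')"
    and cap: "\<forall>m\<in>nodes I. \<forall>i<nM I. cumx I x' m i \<le> cumx I x m i + \<delta>"
    and n: "n \<in> nodes I" and nonleaf: "\<not> is_leaf I n"
  shows "eta' n \<le> eta n + \<delta> * ftotal I (dep I n + 1)"
proof -
  have "fdot I m (cumx I x' m) + cdot I m (y m) - u m \<le> eta n + \<delta> * ftotal I (dep I n + 1)"
    if m: "m \<in> children I n" for m
  proof -
    have m': "m \<in> nodes I" "m \<noteq> root I" "par I m = n" using m in_children_iff by auto
    then have "fdot I m (cumx I x m) + cdot I m (y m) \<le> u m + eta n"
      using feas unfolding feasible_LP_def by auto
    then show ?thesis using fdot_le_shift[of m "cumx I x' m" "cumx I x m" \<delta>] cap m' dep_par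
      by fastforce
  qed
  moreover have "children I n \<noteq> {}"
    using children_nonempty n nonleaf dep_le_nT unfolding is_leaf_def by fastforce
  ultimately show ?thesis
    unfolding alg_step_eta[OF step n nonleaf] using finite_children by (intro Max.boundedI) auto
qed

lemma expected_unit_capacity_cost:
  "(\<Sum>n\<in>nodes I. prob I n *
      (neutral_weight I n * ftotal I (dep I n) + ltil I n * ftotal I (dep I n + 1)))
    = (\<Sum>t=1..nT I. ftotal I t)"
proof -
  have "(\<Sum>n\<in>nodes I. prob I n *
      (neutral_weight I n * ftotal I (dep I n) + ltil I n * ftotal I (dep I n + 1)))
    = (\<Sum>n\<in>nodes I. prob I n * (neutral_weight I n * ftotal I (dep I n)))
      + (\<Sum>n\<in>nodes I. prob I n * ((1 - neutral_weight I n) * ftotal I (dep I (par I n) + 1)))"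
    by (simp only: distrib_left sum.distrib
        sum_ltil_eq_sum_parent[of "\<lambda>n. ftotal I (dep I n + 1)"])
  also have "\<dots> = (\<Sum>n\<in>nodes I. prob I n * ftotal I (dep I n))"
    unfolding sum.distrib[symmetric]
    by (rule sum.cong[OF refl]) (auto simp: neutral_weight_def dep_par algebra_simps)
  also have "\<dots> = (\<Sum>t=1..nT I. ftotal I t)"
    unfolding sum_nodes_by_stage
    by (intro sum.cong refl) (auto simp: stage_def sum_stage_prob_mult[unfolded stage_def])
  finally show ?thesis .
qed

lemma alg_step_zMS_le:
  assumes feas: "feasible_LP I (x, eta, y, u)"
    and step: "alg_step I (x, eta, y, u) (x', eta', y', u')"
    and "0 \<le> \<delta>" and cap: "\<forall>n\<in>nodes I. \<forall>i<nM I. cumx I x' n i \<le> cumx I x n i + \<delta>"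
  shows "zMS I (x', eta', y', u') \<le> zMS I (x, eta, y, u) + \<delta> * (\<Sum>t=1..nT I. ftotal I t)"
proof -
  have "prob I n * (neutral_weight I n * fdot I n (cumx I x' n) + sub_obj I n (y' n) (u' n)
        + ltil I n * eta' n)
      \<le> prob I n * (neutral_weight I n * fdot I n (cumx I x n) + sub_obj I n (y n) (u n)
        + ltil I n * eta n)
        + \<delta> * (prob I n *
            (neutral_weight I n * ftotal I (dep I n) + ltil I n * ftotal I (dep I n + 1)))"
    if n: "n \<in> nodes I" for n
  proof -
    have "neutral_weight I n * fdot I n (cumx I x' n)
        \<le> neutral_weight I n * (fdot I n (cumx I x n) + \<delta> * ftotal I (dep I n))"
      using fdot_le_shift[OF n] cap n neutral_weight_nonneg[OF n] by (simp add: mult_left_mono)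
    moreover have "sub_obj I n (y' n) (u' n) \<le> sub_obj I n (y n) (u n)"
      using step n alg_step_prev_sub_feas[OF feas step n]
      unfolding alg_step_def sub_opt_def by auto
    moreover have "ltil I n * eta' n \<le> ltil I n * (eta n + \<delta> * ftotal I (dep I n + 1))"
    proof (cases "is_leaf I n")
      case True
      then show ?thesis by (simp add: ltil_def)
    next
      case False
      then show ?thesis
        using alg_step_eta_le[OF feas step cap n] ltil_nonneg[OF n] by (simp add: mult_left_mono)
    qed
    ultimately have "neutral_weight I n * fdot I n (cumx I x' n) + sub_obj I n (y' n) (u' n)
        + ltil I n * eta' n
      \<le> neutral_weight I n * fdot I n (cumx I x n) + sub_obj I n (y n) (u n) + ltil I n * eta n
        + \<delta> * (neutral_weight I n * ftotal I (dep I n) + ltil I n * ftotal I (dep I n + 1))"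
      by (simp add: algebra_simps)
    from mult_left_mono[OF this less_imp_le[OF prob_pos[OF n]]] show ?thesis
      by (simp add: algebra_simps)
  qed
  then show ?thesis
    unfolding zMS_eq expected_unit_capacity_cost[symmetric] sum_distrib_left
    by (simp add: sum_mono flip: sum.distrib)
qed

lemma alg_step_cost_bound:
  assumes feas: "feasible_LP I s" and step: "alg_step I s s'" and "0 \<le> \<delta>"
    and rounding: "\<forall>n\<in>nodes I. \<forall>i<nM I. \<lceil>cumx I (fst s) n i\<rceil> \<le> cumx I (fst s) n i + \<delta>"
  shows "feasible_LP I s' \<and> (\<forall>n\<in>nodes I. \<forall>i<nM I. cumx I (fst s') n i \<in> \<int>)
    \<and> zMS I s' \<le> zMS I s + \<delta> * (\<Sum>t=1..nT I. ftotal I t)"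
proof -
  obtain x eta y u x' eta' y' u' where sol: "s = (x, eta, y, u)" "s' = (x', eta', y', u')"
    by (cases s, cases s') auto
  have "\<forall>n\<in>nodes I. \<forall>i<nM I. cumx I x' n i \<le> cumx I x n i + \<delta>"
    using alg_step_cumx_le_ceiling[OF feas[unfolded sol] step[unfolded sol]] rounding sol
    by fastforce
  then show ?thesis
    using alg_step_feasible_LP alg_step_cumx alg_step_zMS_le assms sol by auto
qed

text \<open>Only the first rounding can raise a cumulative capacity, by less than one unit; after
  it all cumulative capacities are integral.\<close>
lemma alg_iterates_zMS_le:
  assumes "feasible_LP I (S 0)" "\<forall>k<K. alg_step I (S k) (S (Suc k))" "1 \<le> k" "k \<le> K"
  shows "feasible_LP I (S k) \<and> (\<forall>n\<in>nodes I. \<forall>i<nM I. cumx I (fst (S k)) n i \<in> \<int>)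
    \<and> zMS I (S k) \<le> zMS I (S 0) + (\<Sum>t=1..nT I. ftotal I t)"
  using assms(3,4)
proof (induction k rule: dec_induct)
  case base
  show ?case
    using alg_step_cost_bound[of "S 0" "S 1" 1] assms by simp
next
  case (step k)
  have "\<forall>n\<in>nodes I. \<forall>i<nM I. \<lceil>cumx I (fst (S k)) n i\<rceil> \<le> cumx I (fst (S k)) n i + 0"
    using step by (auto elim!: Ints_cases)
  then show ?case
    using alg_step_cost_bound[of "S k" "S (Suc k)" 0] assms(2) step by fastforce
qed

lemma sum_ftotal_nonneg: "0 \<le> (\<Sum>t=1..nT I. ftotal I t)"
  unfolding ftotal_def using fc_nonneg by (auto intro!: sum_nonneg)

lemma sum_ftotal_le: "(\<Sum>t=1..nT I. ftotal I t) \<le> real (nM I) * (\<Sum>t=1..nT I. fmax I t)"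
  unfolding sum_distrib_left
proof (rule sum_mono)
  fix t
  have "(\<Sum>i<nM I. fc I t i) \<le> of_nat (card {..<nM I}) * fmax I t"
    unfolding fmax_def by (rule sum_bounded_above) auto
  then show "ftotal I t \<le> real (nM I) * fmax I t" by (simp add: ftotal_def)
qed

lemma alg_output_zMS_le:
  assumes alg: "alg_output I eps sH" and feas: "feasible_LP I s"
  shows "zMS I sH \<le> zMS I s + (\<Sum>t=1..nT I. ftotal I t)"
proof -
  obtain sLP where LP: "optimal_LP I sLP" and iterates: "sH = sLP \<or>
      (\<exists>S K. K \<ge> 1 \<and> S 0 = sLP \<and> (\<forall>k<K. alg_step I (S k) (S (Suc k))) \<and> sH = S K)"
    using alg unfolding alg_output_def by blast
  have "zMS I sH \<le> zMS I sLP + (\<Sum>t=1..nT I. ftotal I t)"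
    using iterates
  proof
    assume "sH = sLP"
    then show ?thesis using sum_ftotal_nonneg by simp
  next
    assume "\<exists>S K. K \<ge> 1 \<and> S 0 = sLP \<and> (\<forall>k<K. alg_step I (S k) (S (Suc k))) \<and> sH = S K"
    then show ?thesis using alg_iterates_zMS_le LP unfolding optimal_LP_def by blast
  qed
  moreover have "zMS I sLP \<le> zMS I s" using LP feas unfolding optimal_LP_def by blast
  ultimately show ?thesis by simp
qed

end

theorem theorem4:
  fixes I :: "'n msinst" and eps :: real and sH sOpt :: "'n sol"
  assumes "valid_inst I"
    and "eps > 0"
    and "alg_output I eps sH"
    and "optimal_MS I sOpt"
    and "Mmin I * (\<Sum>t=1..nT I. fmin I t) + (\<Sum>t=1..nT I. cmin I t * dmin I t) > 0"
  shows "zMS I sH / zMS I sOpt \<le>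
           1 + real (nM I) * (\<Sum>t=1..nT I. fmax I t) /
               (Mmin I * (\<Sum>t=1..nT I. fmin I t) + (\<Sum>t=1..nT I. cmin I t * dmin I t))"
proof -
  interpret valid_instance I using assms(1) by unfold_locales
  obtain x eta y u where opt: "sOpt = (x, eta, y, u)" by (cases sOpt)
  have feas: "feasible_LP I sOpt" and root_int: "\<forall>i<nM I. x (root I) i \<in> \<int>"
    using assms(4) root_in_nodes unfolding optimal_MS_def feasible_MS_def opt by auto
  have "Mmin I * (\<Sum>t=1..nT I. fmin I t) + (\<Sum>t=1..nT I. cmin I t * dmin I t) \<le> zMS I sOpt"
    using lower_bound_le_zMS feas root_int opt by simp
  moreover have "zMS I sH \<le> zMS I sOpt + real (nM I) * (\<Sum>t=1..nT I. fmax I t)"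
    using alg_output_zMS_le[OF assms(3) feas] sum_ftotal_le by simp
  moreover have "0 \<le> real (nM I) * (\<Sum>t=1..nT I. fmax I t)"
    using sum_ftotal_nonneg sum_ftotal_le by simp
  ultimately show ?thesis using assms(5) by (intro divide_le_one_plus_divide)
qed

end
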